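(* If the extremal function $F_n$ is not constant, then its degree satisfies $\deg F_n\ge\lceil\frac{n+1}{2}\rceil$.
   Context: Let $\mathsf E\subset\overline{\mathbb R}$ be compact, proper, with infinitely many points. Divisors are finitely supported $D:\overline{\mathbb C}\to\mathbb Z$; for rational $f$, $(f)_\infty$ is the polar divisor ($0$ for constants) and $\deg f=\deg(f)_\infty$; $\mathcal L(D)=\{f\text{ rational}:(f)_\infty\le D\}$. For $\mathbf c\in\overline{\mathbb R}$, $r(z,\mathbf c)=1/(\mathbf c-z)$ if $\mathbf c\neq\infty$, $r(z,\infty)=z$. Fix $n\ge1$, an integral divisor $D_n^\infty$ of degree $n$ supported in $\overline{\mathbb R}\setminus\mathsf E$, and $x_*\in\overline{\mathbb R}\setminus\mathsf E$, $d_n=D_n^\infty(x_* )$. $F_n$ is the unique maximizer of $\Re\lim_{x\to x_*}F(x)/r(x,x_* )^{d_n}$ over $F\in\mathcal L(D_n^\infty)$ with $\sup_{\mathsf E}|F|\le1$. *)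

theory Defs
  imports "HOL-Analysis.Analysis" "HOL-Computational_Algebra.Polynomial"
begin

text \<open>Points of the Riemann sphere: \<open>Some z\<close> for \<open>z \<in> \<complex>\<close>, \<open>None\<close> for \<open>\<infinity>\<close>.\<close>
type_synonym csphere = "complex option"

definition ext_reals :: "csphere set" where
  "ext_reals = insert None (Some ` \<real>)"

text \<open>Cayley transform: a homeomorphism from the extended real line (with its
  one-point-compactification topology) onto the unit circle; used to express
  compactness of subsets of the extended real line.\<close>
definition cayley :: "csphere \<Rightarrow> complex" where
  "cayley x = (case x of None \<Rightarrow> 1 | Some z \<Rightarrow> (z - \<i>) / (z + \<i>))"

definition compact_ext :: "csphere set \<Rightarrow> bool" where
  "compact_ext E \<longleftrightarrow> compact (cayley ` E)"

text \<open>A rational function is represented by a reduced fraction \<open>p / q\<close>.\<close>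
definition ratfun :: "complex poly \<Rightarrow> complex poly \<Rightarrow> bool" where
  "ratfun p q \<longleftrightarrow> q \<noteq> 0 \<and> coprime p q"

text \<open>Polar divisor of \<open>p/q\<close> (for reduced \<open>p/q\<close>): pole order at each point of the sphere.\<close>
definition polar :: "complex poly \<Rightarrow> complex poly \<Rightarrow> csphere \<Rightarrow> nat" where
  "polar p q x = (case x of Some c \<Rightarrow> order c q | None \<Rightarrow> degree p - degree q)"

definition rdeg :: "complex poly \<Rightarrow> complex poly \<Rightarrow> nat" where
  "rdeg p q = (\<Sum>x\<in>{x. polar p q x \<noteq> 0}. polar p q x)"

definition LL :: "(csphere \<Rightarrow> int) \<Rightarrow> (complex poly \<times> complex poly) set" where
  "LL D = {(p, q). ratfun p q \<and> (\<forall>x. int (polar p q x) \<le> D x)}"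

definition rval :: "complex poly \<Rightarrow> complex poly \<Rightarrow> csphere \<Rightarrow> complex" where
  "rval p q x = (case x of Some z \<Rightarrow> poly p z / poly q z
     | None \<Rightarrow> Lim at_infinity (\<lambda>z. poly p z / poly q z))"

definition lead_val :: "complex poly \<Rightarrow> complex poly \<Rightarrow> csphere \<Rightarrow> nat \<Rightarrow> complex" where
  "lead_val p q xs d = (case xs of
       Some c \<Rightarrow> Lim (at c) (\<lambda>z. (poly p z / poly q z) / (1 / (c - z)) ^ d)
     | None \<Rightarrow> Lim at_infinity (\<lambda>z. (poly p z / poly q z) / z ^ d))"

definition admissible :: "csphere set \<Rightarrow> (csphere \<Rightarrow> int) \<Rightarrow> complex poly \<Rightarrow> complex poly \<Rightarrow> bool" where
  "admissible E D p q \<longleftrightarrow> (p, q) \<in> LL D \<and> (\<forall>x\<in>E. cmod (rval p q x) \<le> 1)"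

definition is_constant_rf :: "complex poly \<Rightarrow> complex poly \<Rightarrow> bool" where
  "is_constant_rf p q \<longleftrightarrow> (\<exists>c. \<forall>z. poly q z \<noteq> 0 \<longrightarrow> poly p z / poly q z = c)"

end

theory Submission imports Defs "HOL-Computational_Algebra.Fundamental_Theorem_Algebra"
  "HOL-Computational_Algebra.Polynomial_Factorial" "HOL-Computational_Algebra.Field_as_Ring"
begin

text \<open>Write \<open>F = p/q\<close>. Every element of \<open>\<L>(D)\<close> is \<open>P/Q\<close> for one fixed denominator \<open>Q\<close> and a
  numerator of degree at most \<open>n\<close>. The finite points of \<open>E\<close> where \<open>|F| = 1\<close> are real zeros of
  \<open>p p\<^sup>* - q q\<^sup>*\<close>, a nonzero polynomial of degree at most \<open>2 max (deg p) (deg q) \<le> 2 deg F\<close>,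
  and of smaller degree if also \<open>|F(\<infinity>)| = 1\<close> with \<open>\<infinity> \<in> E\<close>. So if \<open>2 deg F \<le> n\<close> some
  admissible numerator \<open>K\<close> vanishes wherever \<open>|F| = 1\<close> on \<open>E\<close> but has nonzero leading
  coefficient at \<open>x\<^sub>*\<close>. By compactness of \<open>E\<close>, \<open>(1 - \<epsilon>) F + \<epsilon> t K\<close> is still bounded by 1 on
  \<open>E\<close> for small \<open>\<epsilon> > 0\<close>, and a suitable \<open>t\<close> increases the leading coefficient at \<open>x\<^sub>*\<close>,
  contradicting extremality. Continuity at \<open>\<infinity>\<close> is handled by moving to the unit circle with
  the Cayley transform.\<close>

section \<open>Polynomials transported to the unit circle\<close>

lemma add_i_eq_0_iff: "z + \<i> = 0 \<longleftrightarrow> z = - \<i>"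
  by (metis add.commute add_eq_0_iff2 minus_equation_iff)

lemma eventually_neq_minus_i_at_infinity: "eventually (\<lambda>z. z \<noteq> - \<i>) at_infinity"
  unfolding eventually_at_infinity by (rule exI[of _ 2]) auto

text \<open>\<open>cayley_poly N P w = (1 - w)\<^sup>N P(z)\<close> for \<open>z = \<i>(1 + w)/(1 - w)\<close>, the inverse Cayley transform
  of \<open>w\<close>; unlike \<open>P(z)\<close> it is a polynomial in \<open>w\<close>, and its value at \<open>w = 1\<close>, the image of
  \<open>\<infinity>\<close>, is essentially the coefficient of \<open>z\<^sup>N\<close>.\<close>

definition cayley_poly :: "nat \<Rightarrow> complex poly \<Rightarrow> complex \<Rightarrow> complex" where
  "cayley_poly N P w = (\<Sum>k\<le>N. coeff P k * (1 - w) ^ (N - k) * (\<i> * (1 + w)) ^ k)"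

lemma poly_eq_sum_atMost:
  fixes P :: "'a::{comm_semiring_0,semiring_1} poly"
  assumes "degree P \<le> N"
  shows "poly P z = (\<Sum>k\<le>N. coeff P k * z ^ k)"
proof -
  have "poly P z = (\<Sum>k\<le>degree P. coeff P k * z ^ k)" by (rule poly_altdef)
  also have "\<dots> = (\<Sum>k\<le>N. coeff P k * z ^ k)"
    using assms by (intro sum.mono_neutral_left) (auto simp: coeff_eq_0)
  finally show ?thesis .
qed

lemma cayley_poly_cayley:
  assumes "degree P \<le> N" "z \<noteq> - \<i>"
  shows "cayley_poly N P ((z - \<i>) / (z + \<i>)) = (2 * \<i> / (z + \<i>)) ^ N * poly P z"
proof -
  have zi: "z + \<i> \<noteq> 0" using assms(2) by (auto simp: add_i_eq_0_iff)
  define a where "a = 2 * \<i> / (z + \<i>)"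
  have "1 - (z - \<i>) / (z + \<i>) = a" "\<i> * (1 + (z - \<i>) / (z + \<i>)) = a * z"
    using zi by (simp_all add: a_def field_simps)
  then have "cayley_poly N P ((z - \<i>) / (z + \<i>)) = (\<Sum>k\<le>N. a ^ N * (coeff P k * z ^ k))"
    unfolding cayley_poly_def
    by (intro sum.cong refl) (simp add: power_mult_distrib power_add[symmetric])
  also have "\<dots> = a ^ N * poly P z"
    by (simp add: sum_distrib_left poly_eq_sum_atMost[OF assms(1)])
  finally show ?thesis unfolding a_def .
qed

lemma cayley_poly_1 [simp]: "cayley_poly N P 1 = coeff P N * (2 * \<i>) ^ N"
proof -
  have "cayley_poly N P 1 = (\<Sum>k\<le>N. if k = N then coeff P N * (2 * \<i>) ^ N else 0)"
    unfolding cayley_poly_def by (intro sum.cong refl) (auto simp: mult_ac)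
  then show ?thesis by simp
qed

lemma continuous_on_cayley_poly: "continuous_on S (cayley_poly N P)"
  unfolding cayley_poly_def by (intro continuous_intros)

lemma cayley_poly_add [simp]: "cayley_poly N (P + R) w = cayley_poly N P w + cayley_poly N R w"
  unfolding cayley_poly_def by (simp add: algebra_simps sum.distrib)

lemma cayley_poly_smult [simp]: "cayley_poly N (smult a P) w = a * cayley_poly N P w"
  unfolding cayley_poly_def by (simp add: algebra_simps sum_distrib_left)

lemma cayley_poly_cayley_eq_0_iff:
  assumes "degree P \<le> N" "z \<noteq> - \<i>"
  shows "cayley_poly N P ((z - \<i>) / (z + \<i>)) = 0 \<longleftrightarrow> poly P z = 0"
  using assms by (simp add: cayley_poly_cayley add_i_eq_0_iff)

lemma cayley_poly_cayley_ratio: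
  assumes "degree P \<le> N" "degree R \<le> N" "z \<noteq> - \<i>"
  shows "cayley_poly N P ((z - \<i>) / (z + \<i>)) / cayley_poly N R ((z - \<i>) / (z + \<i>))
       = poly P z / poly R z"
  using assms by (simp add: cayley_poly_cayley add_i_eq_0_iff)

lemma filterlim_cayley_at_infinity: "filterlim (\<lambda>z. (z - \<i>) / (z + \<i>)) (at 1) at_infinity"
proof -
  have "((\<lambda>z. 1 - 2 * \<i> / (z + \<i>)) \<longlongrightarrow> 1 - 0) at_infinity"
    by (intro tendsto_intros tendsto_divide_0[OF tendsto_const]
          tendsto_add_filterlim_at_infinity'[OF filterlim_ident tendsto_const])
  moreover have "eventually (\<lambda>z. 1 - 2 * \<i> / (z + \<i>) = (z - \<i>) / (z + \<i>)) at_infinity"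
    using eventually_neq_minus_i_at_infinity
    by eventually_elim (simp add: add_i_eq_0_iff field_simps)
  ultimately have "((\<lambda>z. (z - \<i>) / (z + \<i>)) \<longlongrightarrow> 1) at_infinity"
    by (simp add: tendsto_cong)
  moreover have "eventually (\<lambda>z. (z - \<i>) / (z + \<i>) \<noteq> 1) at_infinity"
    using eventually_neq_minus_i_at_infinity
    by eventually_elim (simp add: add_i_eq_0_iff field_simps)
  ultimately show ?thesis unfolding filterlim_at by simp
qed

lemma tendsto_poly_ratio_at_infinity:
  fixes P R :: "complex poly"
  assumes "degree P \<le> N" "degree R \<le> N" "coeff R N \<noteq> 0"
  shows "((\<lambda>z. poly P z / poly R z) \<longlongrightarrow> coeff P N / coeff R N) at_infinity"
proof -
  have "((\<lambda>w. cayley_poly N P w / cayley_poly N R w) \<longlongrightarrow> coeff P N / coeff R N) (at 1)"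
    using assms(3) continuous_on_cayley_poly[of UNIV]
    by (auto intro!: tendsto_eq_intros simp: continuous_on_def)
  from filterlim_compose[OF this filterlim_cayley_at_infinity]
  have "((\<lambda>z. cayley_poly N P ((z - \<i>) / (z + \<i>)) / cayley_poly N R ((z - \<i>) / (z + \<i>)))
      \<longlongrightarrow> coeff P N / coeff R N) at_infinity" .
  moreover have "eventually (\<lambda>z. cayley_poly N P ((z - \<i>) / (z + \<i>))
      / cayley_poly N R ((z - \<i>) / (z + \<i>)) = poly P z / poly R z) at_infinity"
    using eventually_neq_minus_i_at_infinity
    by eventually_elim (rule cayley_poly_cayley_ratio[OF assms(1,2)])
  ultimately show ?thesis by (simp add: tendsto_cong)
qed

section \<open>Roots, divisors and degrees\<close>

lemma prod_linear_factors_nonzero: "(\<Prod>x\<in>S. [:-x, 1::'a::idom:] ^ f x) \<noteq> 0"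
  by (cases "finite S") auto

lemma order_prod_linear_factors:
  fixes c :: "'a::idom"
  assumes "finite S"
  shows "order c (\<Prod>x\<in>S. [:-x, 1:] ^ f x) = (if c \<in> S then f c else 0)"
  using assms
proof (induction S rule: finite_induct)
  case (insert a S)
  have "order c ([:-a, 1:] ^ f a) = (if c = a then f a else 0)"
    by (cases "c = a") (auto simp: order_power_n_n intro!: order_0I)
  moreover have "[:-a, 1:] ^ f a * (\<Prod>x\<in>S. [:-x, 1:] ^ f x) \<noteq> 0"
    using prod_linear_factors_nonzero[of f S] by simp
  ultimately show ?case
    using insert by (auto simp: order_mult)
qed simp

lemma degree_prod_linear_factors:
  "degree (\<Prod>x\<in>S. [:-x, 1::'a::idom:] ^ f x) = (\<Sum>x\<in>S. f x)"
  by (cases "finite S") (auto simp: degree_prod_sum_eq degree_linear_power)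

lemma poly_prod_linear_factors_eq_0_iff:
  fixes z :: "'a::idom"
  assumes "finite S"
  shows "poly (\<Prod>x\<in>S. [:-x, 1:] ^ f x) z = 0 \<longleftrightarrow> z \<in> S \<and> f z > 0"
  using assms by (auto simp: poly_prod)

lemma dvd_if_order_le:
  fixes q Q :: "complex poly"
  assumes "q \<noteq> 0" "Q \<noteq> 0" "\<And>c. order c q \<le> order c Q"
  shows "q dvd Q"
  using assms
proof (induction q arbitrary: Q rule: poly_root_order_induct)
  case (no_roots p)
  then have "degree p = 0"
    using fundamental_theorem_of_algebra constant_degree by metis
  then obtain a where "p = [:a:]" by (metis degree_eq_zeroE)
  with no_roots.prems have "is_unit p" by (simp add: is_unit_poly_iff dvd_field_iff)
  then show ?case by (rule unit_imp_dvd)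
next
  case (root p x k)
  then have "p \<noteq> 0" by auto
  then have order_x: "order x ([:-x, 1:] ^ k * p) = k"
    using root by (subst order_mult) (auto simp: order_power_n_n order_0I)
  then have "k \<le> order x Q" using root.prems(3)[of x] by simp
  then have "[:-x, 1:] ^ k dvd Q" using order_divides by blast
  then obtain Q' where Q': "Q = [:-x, 1:] ^ k * Q'" by (elim dvdE)
  with root.prems have "Q' \<noteq> 0" by auto
  have "p dvd Q'"
  proof (rule root.IH[OF \<open>p \<noteq> 0\<close> \<open>Q' \<noteq> 0\<close>])
    fix c
    from root.prems(3)[of c] \<open>p \<noteq> 0\<close> \<open>Q' \<noteq> 0\<close>
    show "order c p \<le> order c Q'" by (simp add: Q' order_mult)
  qed
  then show ?case using Q' by auto
qed simp

lemma degree_eq_sum_order: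
  fixes q :: "complex poly"
  assumes "q \<noteq> 0"
  shows "degree q = (\<Sum>c | poly q c = 0. order c q)"
proof -
  have "degree q = degree (smult (lead_coeff q) (\<Prod>z | poly q z = 0. [:-z, 1:] ^ order z q))"
    by (simp add: complex_poly_decompose)
  also have "\<dots> = (\<Sum>c | poly q c = 0. order c q)"
    using assms by (simp add: degree_prod_linear_factors)
  finally show ?thesis .
qed

lemma poly_div_order_nonzero:
  assumes "Q \<noteq> 0"
  shows "poly (Q div [:-c, 1:] ^ order c Q) c \<noteq> 0"
proof
  define d where "d = order c Q"
  define Q1 where "Q1 = Q div [:-c, 1:] ^ d"
  have Q: "Q = [:-c, 1:] ^ d * Q1"
    unfolding Q1_def d_def using order_1[of c Q] by simp
  assume "poly (Q div [:-c, 1:] ^ order c Q) c = 0"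
  then have "[:-c, 1:] dvd Q1" by (simp add: poly_eq_0_iff_dvd Q1_def d_def)
  then have "[:-c, 1:] ^ Suc d dvd Q"
    unfolding Q power_Suc2 by (rule mult_dvd_mono[OF dvd_refl])
  with order[OF assms, of c] show False by (simp add: d_def)
qed

lemma exists_poly_vanishing_on:
  fixes A :: "complex set"
  assumes "finite A" "card A \<le> n" "x \<notin> Some ` A"
  obtains P :: "complex poly"
  where "degree P \<le> n" "\<And>a. a \<in> A \<Longrightarrow> poly P a = 0"
    "case x of None \<Rightarrow> coeff P n \<noteq> 0 | Some c \<Rightarrow> poly P c \<noteq> 0"
    "x \<noteq> None \<Longrightarrow> degree P = card A"
proof -
  define P0 where "P0 = (\<Prod>a\<in>A. [:-a, 1:] ^ 1 :: complex poly)"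
  have "lead_coeff P0 = 1" unfolding P0_def by (simp add: lead_coeff_prod)
  have "P0 \<noteq> 0" "degree P0 = card A"
    using prod_linear_factors_nonzero[of "\<lambda>_. 1" A] degree_prod_linear_factors[of "\<lambda>_. 1" A]
    by (simp_all add: P0_def)
  have P0_eq_0: "poly P0 z = 0 \<longleftrightarrow> z \<in> A" for z
    unfolding P0_def using poly_prod_linear_factors_eq_0_iff[OF assms(1), of "\<lambda>_. 1"] by simp
  show ?thesis
  proof (cases x)
    case None
    define P where "P = P0 * monom 1 (n - card A)"
    have "lead_coeff P = 1"
      unfolding P_def lead_coeff_mult using \<open>lead_coeff P0 = 1\<close> by (simp add: degree_monom_eq)
    moreover have "degree P = n"
      using \<open>P0 \<noteq> 0\<close> \<open>degree P0 = card A\<close> assms(2)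
      by (simp add: P_def degree_mult_eq degree_monom_eq)
    ultimately show ?thesis using that[of P] None P0_eq_0 by (simp add: P_def)
  next
    case (Some c)
    with that[of P0] P0_eq_0 assms(2,3) \<open>degree P0 = card A\<close> show ?thesis by auto
  qed
qed

lemma divisor_denominator_exists:
  fixes D :: "csphere \<Rightarrow> int"
  assumes nonneg: "\<And>x. D x \<ge> 0" and fin: "finite {x. D x \<noteq> 0}"
    and deg: "(\<Sum>x\<in>{x. D x \<noteq> 0}. D x) = int n"
  obtains Q :: "complex poly"
  where "Q \<noteq> 0" "\<And>c. order c Q = nat (D (Some c))" "degree Q + nat (D None) = n"
proof
  define S where "S = {c. D (Some c) \<noteq> 0}"
  define Q where "Q = (\<Prod>c\<in>S. [:-c, 1:] ^ nat (D (Some c)))"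
  have "Some ` S \<subseteq> {x. D x \<noteq> 0}" unfolding S_def by auto
  then have "finite (Some ` S)" using fin by (rule finite_subset)
  then have S_fin: "finite S" by (rule finite_imageD) simp
  show "Q \<noteq> 0" unfolding Q_def by (rule prod_linear_factors_nonzero)
  show "order c Q = nat (D (Some c))" for c
    unfolding Q_def using order_prod_linear_factors[OF S_fin] by (auto simp: S_def)
  have "{x. D x \<noteq> 0} \<subseteq> insert None (Some ` S)"
  proof
    fix x assume "x \<in> {x. D x \<noteq> 0}"
    then show "x \<in> insert None (Some ` S)" by (cases x) (auto simp: S_def)
  qed
  then have "int n = (\<Sum>x\<in>insert None (Some ` S). D x)"
    unfolding deg[symmetric] using S_fin by (intro sum.mono_neutral_left) auto
  also have "\<dots> = D None + (\<Sum>c\<in>S. D (Some c))"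
    using S_fin by (simp add: sum.reindex)
  also have "\<dots> = int (nat (D None)) + (\<Sum>c\<in>S. int (nat (D (Some c))))"
    using nonneg by simp
  also have "\<dots> = int (nat (D None) + degree Q)"
    unfolding Q_def degree_prod_linear_factors by simp
  finally show "degree Q + nat (D None) = n" by (simp only: of_nat_eq_iff add.commute)
qed

lemma max_degree_le_rdeg:
  assumes "q \<noteq> 0"
  shows "max (degree p) (degree q) \<le> rdeg p q"
proof -
  define T where "T = insert None (Some ` {c. poly q c = 0})"
  have T_fin: "finite T" unfolding T_def using poly_roots_finite[OF assms] by auto
  have "{x. polar p q x \<noteq> 0} \<subseteq> T"
  proof
    fix x assume "x \<in> {x. polar p q x \<noteq> 0}"
    then show "x \<in> T" using assms by (cases x) (auto simp: T_def polar_def order_root)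
  qed
  then have "rdeg p q = (\<Sum>x\<in>T. polar p q x)"
    unfolding rdeg_def using T_fin by (intro sum.mono_neutral_left) auto
  also have "\<dots> = polar p q None + (\<Sum>c | poly q c = 0. polar p q (Some c))"
    unfolding T_def using poly_roots_finite[OF assms] by (simp add: sum.reindex)
  also have "\<dots> = (degree p - degree q) + (\<Sum>c | poly q c = 0. order c q)"
    by (simp add: polar_def)
  also have "\<dots> = (degree p - degree q) + degree q"
    using degree_eq_sum_order[OF assms] by simp
  finally show ?thesis by simp
qed

lemma degree_map_poly_cnj [simp]: "degree (map_poly cnj p) = degree p"
  by (rule degree_map_poly) auto

lemma coeff_map_poly_cnj [simp]: "coeff (map_poly cnj p) k = cnj (coeff p k)"
  by (rule coeff_map_poly) auto

lemma map_poly_cnj_eq_0_iff [simp]: "map_poly cnj p = 0 \<longleftrightarrow> p = 0"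
  by (metis degree_map_poly_cnj coeff_map_poly_cnj leading_coeff_0_iff complex_cnj_zero_iff)

definition norm_sq_diff_poly :: "complex poly \<Rightarrow> complex poly \<Rightarrow> complex poly" where
  "norm_sq_diff_poly p q = p * map_poly cnj p - q * map_poly cnj q"

lemma poly_norm_sq_diff_poly:
  assumes "z \<in> \<real>"
  shows "poly (norm_sq_diff_poly p q) z = of_real ((norm (poly p z))\<^sup>2) - of_real ((norm (poly q z))\<^sup>2)"
proof -
  have "cnj z = z" using assms by (simp add: Reals_cnj_iff)
  then show ?thesis
    unfolding norm_sq_diff_poly_def poly_diff poly_mult poly_map_poly_cnj complex_norm_square
    by simp
qed

lemma degree_norm_sq_diff_poly_le:
  "degree (norm_sq_diff_poly p q) \<le> 2 * max (degree p) (degree q)"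
proof -
  have "degree (p * map_poly cnj p) \<le> 2 * max (degree p) (degree q)"
    "degree (q * map_poly cnj q) \<le> 2 * max (degree p) (degree q)"
    using degree_mult_le[of p "map_poly cnj p"] degree_mult_le[of q "map_poly cnj q"] by simp_all
  then show ?thesis unfolding norm_sq_diff_poly_def using degree_diff_le by blast
qed

lemma norm_sq_diff_poly_nonzero:
  assumes "q \<noteq> 0" "coprime p q" and real_roots: "\<And>c. poly q c = 0 \<Longrightarrow> c \<in> \<real>"
    and nonconst: "degree p \<noteq> 0 \<or> degree q \<noteq> 0"
  shows "norm_sq_diff_poly p q \<noteq> 0"
proof
  assume "norm_sq_diff_poly p q = 0"
  then have eq: "p * map_poly cnj p = q * map_poly cnj q" by (simp add: norm_sq_diff_poly_def)
  with \<open>q \<noteq> 0\<close> have "p \<noteq> 0" by auto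
  from arg_cong[OF eq, of degree] have "degree p = degree q"
    using \<open>p \<noteq> 0\<close> \<open>q \<noteq> 0\<close> by (simp add: degree_mult_eq)
  with nonconst have "\<not> constant (poly q)" by (simp add: constant_degree)
  then obtain c where qc: "poly q c = 0" using fundamental_theorem_of_algebra by blast
  have "poly (norm_sq_diff_poly p q) c = 0" using eq by (simp add: norm_sq_diff_poly_def)
  then have "of_real ((norm (poly p c))\<^sup>2) = (0::complex)"
    using qc by (simp only: poly_norm_sq_diff_poly[OF real_roots[OF qc]]) simp
  then have "poly p c = 0" by simp
  with qc have "[:-c, 1:] dvd p" "[:-c, 1:] dvd q" by (simp_all add: poly_eq_0_iff_dvd)
  with \<open>coprime p q\<close> have "is_unit [:-c, 1:]" by (rule coprime_common_divisor)
  then show False by (simp add: is_unit_poly_iff)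
qed

lemma degree_norm_sq_diff_poly_less:
  assumes "norm_sq_diff_poly p q \<noteq> 0" "degree p \<le> degree q"
    and "norm (coeff p (degree q)) = norm (lead_coeff q)"
  shows "degree (norm_sq_diff_poly p q) < 2 * degree q"
proof -
  have "coeff (p * map_poly cnj p) (2 * degree q) = coeff p (degree q) * cnj (coeff p (degree q))"
  proof (cases "degree p = degree q")
    case False
    with assms(2) have "coeff p (degree q) = 0" "degree (p * map_poly cnj p) < 2 * degree q"
      using degree_mult_le[of p "map_poly cnj p"] by (auto intro: coeff_eq_0)
    then show ?thesis by (simp add: coeff_eq_0)
  next
    case True
    then show ?thesis using coeff_mult_degree_sum[of p "map_poly cnj p"] by (simp add: mult_2)
  qed
  moreover have "coeff (q * map_poly cnj q) (2 * degree q) = lead_coeff q * cnj (lead_coeff q)"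
    using coeff_mult_degree_sum[of q "map_poly cnj q"] by (simp add: mult_2)
  ultimately have "coeff (norm_sq_diff_poly p q) (2 * degree q) = 0"
    using assms(3) by (simp add: norm_sq_diff_poly_def complex_norm_square[symmetric])
  with assms(1) have "degree (norm_sq_diff_poly p q) \<noteq> 2 * degree q"
    by (metis leading_coeff_0_iff)
  moreover have "degree (norm_sq_diff_poly p q) \<le> 2 * degree q"
    using degree_norm_sq_diff_poly_le[of p q] assms(2) by simp
  ultimately show ?thesis by simp
qed

section \<open>Values and leading coefficients of rational functions\<close>

lemma eventually_poly_nonzero_at_infinity:
  fixes Q :: "complex poly"
  assumes "Q \<noteq> 0"
  shows "eventually (\<lambda>z. poly Q z \<noteq> 0) at_infinity"
proof -
  have "bounded {z. poly Q z = 0}"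
    using poly_roots_finite[OF assms] by (rule finite_imp_bounded)
  then obtain B where "\<And>z. poly Q z = 0 \<Longrightarrow> norm z \<le> B" unfolding bounded_iff by auto
  then show ?thesis unfolding eventually_at_infinity by (intro exI[of _ "B + 1"]) force
qed

lemma eventually_poly_nonzero_at:
  fixes Q :: "complex poly"
  assumes "Q \<noteq> 0"
  shows "eventually (\<lambda>z. poly Q z \<noteq> 0 \<and> z \<noteq> c) (at c)"
proof -
  define S where "S = {z. poly Q z = 0} - {c}"
  have "open (- S)"
    unfolding S_def using poly_roots_finite[OF assms] by (intro open_Compl finite_imp_closed) auto
  then show ?thesis unfolding eventually_at_topological
    by (intro exI[of _ "- S"]) (auto simp: S_def)
qed

lemma cayley_of_ext_real:
  assumes "Some z \<in> ext_reals"
  shows "z \<noteq> - \<i>" "cayley (Some z) = (z - \<i>) / (z + \<i>)"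
  using assms by (auto simp: ext_reals_def complex_is_Real_iff cayley_def)

lemma rval_eq_cayley_poly_ratio:
  fixes p q P Q :: "complex poly"
  assumes "Q \<noteq> 0" "degree Q \<le> N" "degree P \<le> N"
    and num: "\<forall>z. poly Q z \<noteq> 0 \<longrightarrow> poly p z / poly q z = poly P z / poly Q z"
    and "x \<in> ext_reals"
    and Q_nonzero: "case x of Some z \<Rightarrow> poly Q z \<noteq> 0 | None \<Rightarrow> coeff Q N \<noteq> 0"
  shows "rval p q x = cayley_poly N P (cayley x) / cayley_poly N Q (cayley x)"
proof (cases x)
  case None
  have "eventually (\<lambda>z. poly P z / poly Q z = poly p z / poly q z) at_infinity"
    using eventually_poly_nonzero_at_infinity[OF \<open>Q \<noteq> 0\<close>] by eventually_elim (use num in auto)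
  with tendsto_poly_ratio_at_infinity[OF assms(3,2)] Q_nonzero None
  have "((\<lambda>z. poly p z / poly q z) \<longlongrightarrow> coeff P N / coeff Q N) at_infinity"
    by (auto intro: Lim_transform_eventually)
  then show ?thesis
    using None Q_nonzero by (simp add: rval_def cayley_def tendsto_Lim[OF trivial_limit_at_infinity])
next
  case (Some z)
  with \<open>x \<in> ext_reals\<close> num Q_nonzero cayley_poly_cayley_ratio[OF assms(3,2)] cayley_of_ext_real
  show ?thesis by (simp add: rval_def)
qed

lemma lead_val_Some_eq:
  fixes p q P Q :: "complex poly"
  assumes "Q \<noteq> 0" "d = order c Q"
    and num: "\<forall>z. poly Q z \<noteq> 0 \<longrightarrow> poly p z / poly q z = poly P z / poly Q z"
  shows "lead_val p q (Some c) d = (-1) ^ d * poly P c / poly (Q div [:-c, 1:] ^ d) c"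
proof -
  define Q1 where "Q1 = Q div [:-c, 1:] ^ d"
  have Q: "Q = [:-c, 1:] ^ d * Q1" unfolding Q1_def assms(2) using order_1[of c Q] by simp
  have "poly Q1 c \<noteq> 0" unfolding Q1_def assms(2) by (rule poly_div_order_nonzero[OF assms(1)])
  then have "((\<lambda>z. (-1) ^ d * poly P z / poly Q1 z) \<longlongrightarrow> (-1) ^ d * poly P c / poly Q1 c) (at c)"
    by (intro tendsto_intros) auto
  moreover have "eventually (\<lambda>z. (-1) ^ d * poly P z / poly Q1 z
      = (poly p z / poly q z) / (1 / (c - z)) ^ d) (at c)"
    using eventually_poly_nonzero_at[OF assms(1), of c]
  proof eventually_elim
    case (elim z)
    then have "z - c \<noteq> 0" by simp
    have "(c - z) ^ d = (-1) ^ d * (z - c) ^ d"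
      by (metis minus_diff_eq mult_minus1 power_mult_distrib)
    moreover have "(poly p z / poly q z) / (1 / (c - z)) ^ d = poly P z / poly Q z * (c - z) ^ d"
      using num elim by (simp add: power_one_over)
    ultimately show ?case
      using \<open>z - c \<noteq> 0\<close> by (simp add: Q field_simps)
  qed
  ultimately have "((\<lambda>z. (poly p z / poly q z) / (1 / (c - z)) ^ d)
      \<longlongrightarrow> (-1) ^ d * poly P c / poly Q1 c) (at c)"
    by (rule Lim_transform_eventually)
  then show ?thesis unfolding lead_val_def Q1_def by (simp add: tendsto_Lim[OF at_neq_bot])
qed

lemma lead_val_None_eq:
  fixes p q P Q :: "complex poly"
  assumes "Q \<noteq> 0" "degree P \<le> N" "N = degree Q + d"
    and num: "\<forall>z. poly Q z \<noteq> 0 \<longrightarrow> poly p z / poly q z = poly P z / poly Q z"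
  shows "lead_val p q None d = coeff P N / lead_coeff Q"
proof -
  define R where "R = monom 1 d * Q"
  have "degree R = N" "coeff R N = lead_coeff Q"
    using assms(1,3) by (simp_all add: R_def degree_mult_eq degree_monom_eq coeff_monom_mult)
  then have "((\<lambda>z. poly P z / poly R z) \<longlongrightarrow> coeff P N / lead_coeff Q) at_infinity"
    using tendsto_poly_ratio_at_infinity[OF assms(2), of R] assms(1) by simp
  moreover have "eventually (\<lambda>z. poly P z / poly R z = (poly p z / poly q z) / z ^ d) at_infinity"
    using eventually_poly_nonzero_at_infinity[OF assms(1)]
    by eventually_elim (use num in \<open>auto simp: R_def poly_monom\<close>)
  ultimately have "((\<lambda>z. (poly p z / poly q z) / z ^ d) \<longlongrightarrow> coeff P N / lead_coeff Q) at_infinity"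
    by (rule Lim_transform_eventually)
  then show ?thesis unfolding lead_val_def by (simp add: tendsto_Lim[OF trivial_limit_at_infinity])
qed

lemma degree_nonzero_if_not_is_constant_rf:
  assumes "\<not> is_constant_rf p q"
  shows "degree p \<noteq> 0 \<or> degree q \<noteq> 0"
proof (rule ccontr)
  assume "\<not> (degree p \<noteq> 0 \<or> degree q \<noteq> 0)"
  then obtain a b where "p = [:a:]" "q = [:b:]" by (metis degree_eq_zeroE)
  then have "is_constant_rf p q" unfolding is_constant_rf_def by (intro exI[of _ "a / b"]) simp
  with assms show False by contradiction
qed

section \<open>The extremal problem\<close>

lemma norm_convex_perturbation_le_1:
  fixes f g :: "'a::topological_space \<Rightarrow> 'b::real_normed_vector"
  assumes "compact C" "continuous_on C f" "continuous_on C g"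
    and f_le: "\<And>w. w \<in> C \<Longrightarrow> norm (f w) \<le> 1"
    and g_zero: "\<And>w. w \<in> C \<Longrightarrow> norm (f w) = 1 \<Longrightarrow> g w = 0"
  obtains \<epsilon> :: real
  where "0 < \<epsilon>" "\<epsilon> < 1" "\<And>w. w \<in> C \<Longrightarrow> norm ((1 - \<epsilon>) *\<^sub>R f w + \<epsilon> *\<^sub>R g w) \<le> 1"
proof (cases "C = {}")
  case True
  then show ?thesis by (intro that[of "1/2"]) auto
next
  case False
  \<comment> \<open>\<open>\<psi>\<close> vanishes only where \<open>|f| = 1 \<le> |g|\<close>, which never happens; its positive minimum
    is the room left below 1 wherever \<open>g\<close> is larger than \<open>f\<close>.\<close>
  define \<psi> where "\<psi> w = (1 - norm (f w)) + max 0 (norm (f w) - norm (g w))" for w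
  have "continuous_on C \<psi>"
    unfolding \<psi>_def by (intro continuous_intros assms)
  then obtain w0 where "w0 \<in> C" and w0_min: "\<And>w. w \<in> C \<Longrightarrow> \<psi> w0 \<le> \<psi> w"
    using continuous_attains_inf[OF \<open>compact C\<close> False] by blast
  have \<delta>_pos: "\<psi> w0 > 0"
  proof (rule ccontr)
    assume "\<not> \<psi> w0 > 0"
    with f_le[OF \<open>w0 \<in> C\<close>] have "norm (f w0) = 1" "norm (f w0) \<le> norm (g w0)"
      unfolding \<psi>_def by linarith+
    with g_zero[OF \<open>w0 \<in> C\<close>] show False by simp
  qed
  have "bounded (g ` C)"
    using assms(1,3) by (intro compact_imp_bounded compact_continuous_image)
  then obtain M where "M > 0" and M: "\<And>w. w \<in> C \<Longrightarrow> norm (g w) \<le> M"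
    by (auto simp: bounded_pos)
  define \<epsilon> where "\<epsilon> = min (1/2) (\<psi> w0 / M)"
  have \<epsilon>: "0 < \<epsilon>" "\<epsilon> < 1" "\<epsilon> * M \<le> \<psi> w0"
    using \<delta>_pos \<open>M > 0\<close> by (auto simp: \<epsilon>_def min_def field_simps)
  show ?thesis
  proof (rule that[OF \<epsilon>(1,2)])
    fix w assume "w \<in> C"
    have "norm ((1 - \<epsilon>) *\<^sub>R f w + \<epsilon> *\<^sub>R g w) \<le> (1 - \<epsilon>) * norm (f w) + \<epsilon> * norm (g w)"
      using norm_triangle_ineq[of "(1 - \<epsilon>) *\<^sub>R f w" "\<epsilon> *\<^sub>R g w"] \<epsilon> by simp
    also have "\<dots> \<le> 1"
    proof (cases "norm (g w) \<le> norm (f w)")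
      case True
      have "\<epsilon> * norm (g w) \<le> \<epsilon> * norm (f w)" using True \<epsilon> by (simp add: mult_left_mono)
      then show ?thesis using f_le[OF \<open>w \<in> C\<close>] by (simp add: algebra_simps)
    next
      case False
      then have "\<psi> w0 \<le> 1 - norm (f w)" using w0_min[OF \<open>w \<in> C\<close>] by (simp add: \<psi>_def)
      moreover have "\<epsilon> * norm (g w) \<le> \<epsilon> * M"
        using M[OF \<open>w \<in> C\<close>] \<epsilon> by (simp add: mult_left_mono)
      moreover have "(1 - \<epsilon>) * norm (f w) \<le> norm (f w)"
        using \<epsilon> by (simp add: mult_left_le_one_le)
      ultimately show ?thesis using \<epsilon>(3) by linarith
    qed
    finally show "norm ((1 - \<epsilon>) *\<^sub>R f w + \<epsilon> *\<^sub>R g w) \<le> 1" .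
  qed
qed

locale common_denominator =
  fixes E :: "csphere set" and D :: "csphere \<Rightarrow> int" and n :: nat and Q :: "complex poly"
  assumes E_sub: "E \<subseteq> ext_reals"
    and E_compact: "compact_ext E"
    and D_nonneg: "\<And>x. D x \<ge> 0"
    and D_supp: "{x. D x \<noteq> 0} \<subseteq> ext_reals - E"
    and Q_nonzero: "Q \<noteq> 0"
    and order_Q: "\<And>c. order c Q = nat (D (Some c))"
    and degree_Q: "degree Q + nat (D None) = n"
begin

lemma D_eq_0_on_E: "x \<in> E \<Longrightarrow> D x = 0"
  using D_supp by blast

lemma Q_nonvanishing_on_E:
  assumes "x \<in> E"
  shows "case x of Some z \<Rightarrow> poly Q z \<noteq> 0 | None \<Rightarrow> coeff Q n \<noteq> 0"
proof (cases x)
  case None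
  with assms degree_Q D_eq_0_on_E have "degree Q = n" by simp
  with Q_nonzero None show ?thesis by auto
next
  case (Some z)
  with assms have "order z Q = 0" by (simp add: order_Q D_eq_0_on_E)
  with Q_nonzero Some show ?thesis by (simp add: order_root)
qed

definition has_numerator :: "complex poly \<Rightarrow> complex poly \<Rightarrow> complex poly \<Rightarrow> bool" where
  "has_numerator p q P \<longleftrightarrow> (\<forall>z. poly Q z \<noteq> 0 \<longrightarrow> poly p z / poly q z = poly P z / poly Q z)"

lemma LL_poles:
  assumes "(p, q) \<in> LL D" "poly q c = 0"
  shows "c \<in> \<real>" "Some c \<notin> E"
proof -
  from assms have "order c q > 0" "int (polar p q (Some c)) \<le> D (Some c)"
    by (auto simp: LL_def ratfun_def order_gt_0_iff)
  then have "D (Some c) \<noteq> 0" by (simp add: polar_def)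
  with D_supp show "c \<in> \<real>" "Some c \<notin> E" by (auto simp: ext_reals_def)
qed

lemma LL_degree_le_at_infinity:
  assumes "(p, q) \<in> LL D" "None \<in> E"
  shows "degree p \<le> degree q"
proof -
  from assms(1) have "int (polar p q None) \<le> D None" by (auto simp: LL_def)
  with D_eq_0_on_E[OF assms(2)] show ?thesis by (simp add: polar_def)
qed

lemma LL_has_numerator:
  assumes "(p, q) \<in> LL D"
  obtains P where "has_numerator p q P" "degree P \<le> n"
proof -
  from assms have "q \<noteq> 0" and polar_le: "\<And>x. int (polar p q x) \<le> D x"
    by (auto simp: LL_def ratfun_def)
  have "order c q \<le> order c Q" for c
    using polar_le[of "Some c"] D_nonneg[of "Some c"] by (simp add: polar_def order_Q)
  then have "q dvd Q" by (rule dvd_if_order_le[OF \<open>q \<noteq> 0\<close> Q_nonzero])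
  then obtain W where QW: "Q = q * W" by (elim dvdE)
  with Q_nonzero have "W \<noteq> 0" by auto
  show ?thesis
  proof
    show "has_numerator p q (p * W)"
      unfolding has_numerator_def by (auto simp: QW)
    have "degree p \<le> degree q + nat (D None)"
      using polar_le[of None] by (simp add: polar_def)
    then show "degree (p * W) \<le> n"
      using \<open>q \<noteq> 0\<close> \<open>W \<noteq> 0\<close> degree_Q QW
      by (cases "p = 0") (auto simp: degree_mult_eq)
  qed
qed

lemma reduced_fraction_in_LL:
  assumes "degree P \<le> n"
  obtains p q where "(p, q) \<in> LL D" "has_numerator p q P"
proof
  define g where "g = gcd P Q"
  have P: "P = (P div g) * g" and Q: "Q = (Q div g) * g" by (simp_all add: g_def)
  with Q_nonzero have "g \<noteq> 0" "Q div g \<noteq> 0" by auto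
  have "poly (P div g) z / poly (Q div g) z = poly P z / poly Q z" if "poly Q z \<noteq> 0" for z
  proof -
    have "poly P z / poly Q z = (poly (P div g) z * poly g z) / (poly (Q div g) z * poly g z)"
      by (metis P Q poly_mult)
    moreover from that have "poly g z \<noteq> 0" by (metis Q poly_mult mult_zero_right)
    ultimately show ?thesis by simp
  qed
  then show "has_numerator (P div g) (Q div g) P"
    unfolding has_numerator_def by simp
  have "int (polar (P div g) (Q div g) x) \<le> D x" for x
  proof (cases x)
    case (Some c)
    have "order c (Q div g) \<le> order c Q"
      by (rule dvd_imp_order_le[OF Q_nonzero]) (metis Q dvd_triv_left)
    with Some D_nonneg[of x] show ?thesis by (simp add: polar_def order_Q)
  next
    case None
    have "degree (P div g) \<le> degree (Q div g) + nat (D None)"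
    proof (cases "P div g = 0")
      case False
      have "degree P = degree (P div g) + degree g"
        using \<open>g \<noteq> 0\<close> False P by (metis degree_mult_eq)
      moreover have "degree Q = degree (Q div g) + degree g"
        using \<open>g \<noteq> 0\<close> \<open>Q div g \<noteq> 0\<close> Q by (metis degree_mult_eq)
      ultimately show ?thesis using assms degree_Q by linarith
    qed simp
    with None D_nonneg[of x] show ?thesis by (simp add: polar_def)
  qed
  moreover have "coprime (P div g) (Q div g)"
    unfolding g_def by (rule div_gcd_coprime) (use Q_nonzero in simp)
  ultimately show "(P div g, Q div g) \<in> LL D"
    using \<open>Q div g \<noteq> 0\<close> by (simp add: LL_def ratfun_def)
qed

definition circle_fun :: "complex poly \<Rightarrow> complex \<Rightarrow> complex" where
  "circle_fun P w = cayley_poly n P w / cayley_poly n Q w"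

lemma circle_fun_add [simp]: "circle_fun (P + R) w = circle_fun P w + circle_fun R w"
  by (simp add: circle_fun_def add_divide_distrib)

lemma circle_fun_smult [simp]: "circle_fun (smult a P) w = a * circle_fun P w"
  by (simp add: circle_fun_def)

lemma rval_eq_circle_fun:
  assumes "has_numerator p q P" "degree P \<le> n" "x \<in> E"
  shows "rval p q x = circle_fun P (cayley x)"
  unfolding circle_fun_def
  using assms E_sub degree_Q Q_nonvanishing_on_E[OF assms(3)]
  by (intro rval_eq_cayley_poly_ratio[OF Q_nonzero]) (auto simp: has_numerator_def)

lemma circle_fun_cayley_eq_0:
  assumes "degree P \<le> n" "x \<in> E"
    and "case x of None \<Rightarrow> coeff P n = 0 | Some z \<Rightarrow> poly P z = 0"
  shows "circle_fun P (cayley x) = 0"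
  using assms E_sub cayley_of_ext_real
  by (cases x) (auto simp: circle_fun_def cayley_def cayley_poly_cayley_eq_0_iff)

lemma cayley_poly_Q_nonzero:
  assumes "x \<in> E"
  shows "cayley_poly n Q (cayley x) \<noteq> 0"
  using Q_nonvanishing_on_E[OF assms] assms E_sub degree_Q cayley_of_ext_real
  by (cases x) (auto simp: cayley_def cayley_poly_cayley_eq_0_iff)

lemma continuous_on_circle_fun: "continuous_on (cayley ` E) (circle_fun P)"
  unfolding circle_fun_def using cayley_poly_Q_nonzero
  by (intro continuous_on_divide continuous_on_cayley_poly) auto

definition leading_coeff_at :: "csphere \<Rightarrow> complex poly \<Rightarrow> complex" where
  "leading_coeff_at x P = (case x of
       Some c \<Rightarrow> (-1) ^ nat (D x) * poly P c / poly (Q div [:-c, 1:] ^ nat (D x)) c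
     | None \<Rightarrow> coeff P n / lead_coeff Q)"

lemma leading_coeff_at_add [simp]:
  "leading_coeff_at x (P + R) = leading_coeff_at x P + leading_coeff_at x R"
  by (cases x) (simp_all add: leading_coeff_at_def add_divide_distrib algebra_simps)

lemma leading_coeff_at_smult [simp]: "leading_coeff_at x (smult a P) = a * leading_coeff_at x P"
  by (cases x) (simp_all add: leading_coeff_at_def)

lemma leading_coeff_at_nonzero:
  assumes "case x of None \<Rightarrow> coeff P n \<noteq> 0 | Some c \<Rightarrow> poly P c \<noteq> 0"
  shows "leading_coeff_at x P \<noteq> 0"
  using assms Q_nonzero poly_div_order_nonzero[OF Q_nonzero]
  by (cases x) (auto simp: leading_coeff_at_def order_Q)

lemma lead_val_eq_leading_coeff_at:
  assumes "has_numerator p q P" "degree P \<le> n"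
  shows "lead_val p q x (nat (D x)) = leading_coeff_at x P"
proof (cases x)
  case None
  with lead_val_None_eq[OF Q_nonzero assms(2)] degree_Q assms(1) show ?thesis
    by (simp add: leading_coeff_at_def has_numerator_def)
next
  case (Some c)
  with lead_val_Some_eq[OF Q_nonzero] assms(1) show ?thesis
    by (simp add: leading_coeff_at_def has_numerator_def order_Q)
qed

lemma admissible_perturbation:
  assumes "admissible E D p q" "has_numerator p q PF" "degree PF \<le> n" "degree PK \<le> n"
    and vanish: "\<And>x. x \<in> E \<Longrightarrow> cmod (rval p q x) = 1 \<Longrightarrow> circle_fun PK (cayley x) = 0"
  obtains \<epsilon> :: real and p' q' where "0 < \<epsilon>" "admissible E D p' q'"
    "\<And>x. lead_val p' q' x (nat (D x))
       = of_real (1 - \<epsilon>) * leading_coeff_at x PF + of_real \<epsilon> * t * leading_coeff_at x PK"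
proof -
  let ?C = "cayley ` E"
  have "compact ?C" using E_compact by (simp add: compact_ext_def)
  have "continuous_on ?C (\<lambda>w. t * circle_fun PK w)"
    by (intro continuous_on_mult continuous_on_const continuous_on_circle_fun)
  moreover have "cmod (circle_fun PF w) \<le> 1" if "w \<in> ?C" for w
  proof -
    from that obtain x where "x \<in> E" "w = cayley x" by blast
    moreover have "cmod (rval p q x) \<le> 1"
      using assms(1) \<open>x \<in> E\<close> by (simp add: admissible_def)
    ultimately show ?thesis using rval_eq_circle_fun[OF assms(2,3)] by simp
  qed
  moreover have "t * circle_fun PK w = 0" if "w \<in> ?C" "cmod (circle_fun PF w) = 1" for w
    using vanish that rval_eq_circle_fun[OF assms(2,3)] by auto
  ultimately obtain \<epsilon> :: real where \<epsilon>: "0 < \<epsilon>" "\<epsilon> < 1" and bound: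
    "\<And>w. w \<in> ?C \<Longrightarrow> cmod ((1 - \<epsilon>) *\<^sub>R circle_fun PF w + \<epsilon> *\<^sub>R (t * circle_fun PK w)) \<le> 1"
    using norm_convex_perturbation_le_1[OF \<open>compact ?C\<close> continuous_on_circle_fun] by blast
  define PG where "PG = smult (of_real (1 - \<epsilon>)) PF + smult (of_real \<epsilon> * t) PK"
  have "degree PG \<le> n"
    unfolding PG_def using assms(3,4) degree_add_le degree_smult_le order.trans by metis
  then obtain p' q' where "(p', q') \<in> LL D" "has_numerator p' q' PG"
    by (rule reduced_fraction_in_LL)
  show ?thesis
  proof (rule that[OF \<epsilon>(1)])
    show "admissible E D p' q'"
      unfolding admissible_def
      using \<open>(p', q') \<in> LL D\<close> bound rval_eq_circle_fun[OF \<open>has_numerator p' q' PG\<close> \<open>degree PG \<le> n\<close>]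
      by (simp add: PG_def scaleR_conv_of_real mult.assoc)
    show "lead_val p' q' x (nat (D x))
       = of_real (1 - \<epsilon>) * leading_coeff_at x PF + of_real \<epsilon> * t * leading_coeff_at x PK" for x
      using lead_val_eq_leading_coeff_at[OF \<open>has_numerator p' q' PG\<close> \<open>degree PG \<le> n\<close>]
      by (simp add: PG_def)
  qed
qed

lemma card_unimodular_points:
  assumes "(p, q) \<in> LL D" "\<not> is_constant_rf p q"
  defines "A \<equiv> {z. Some z \<in> E \<and> cmod (rval p q (Some z)) = 1}"
  shows "finite A" "card A \<le> 2 * max (degree p) (degree q)"
    and "None \<in> E \<Longrightarrow> cmod (rval p q None) = 1 \<Longrightarrow> card A < 2 * max (degree p) (degree q)"
proof -
  from assms(1) have "q \<noteq> 0" "coprime p q" by (auto simp: LL_def ratfun_def)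
  define R where "R = norm_sq_diff_poly p q"
  have "R \<noteq> 0"
    unfolding R_def using \<open>q \<noteq> 0\<close> \<open>coprime p q\<close> LL_poles(1)[OF assms(1)]
      degree_nonzero_if_not_is_constant_rf[OF assms(2)] by (rule norm_sq_diff_poly_nonzero)
  have "A \<subseteq> {z. poly R z = 0}"
  proof
    fix z assume "z \<in> A"
    then have "Some z \<in> E" "cmod (poly p z / poly q z) = 1" by (auto simp: A_def rval_def)
    moreover from \<open>Some z \<in> E\<close> E_sub have "z \<in> \<real>" by (auto simp: ext_reals_def)
    moreover have "poly q z \<noteq> 0" using LL_poles(2)[OF assms(1)] \<open>Some z \<in> E\<close> by blast
    ultimately show "z \<in> {z. poly R z = 0}"
      by (simp add: R_def poly_norm_sq_diff_poly norm_divide)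
  qed
  then show "finite A" using poly_roots_finite[OF \<open>R \<noteq> 0\<close>] by (rule finite_subset)
  have card_le: "card A \<le> degree R"
    using card_mono[OF poly_roots_finite[OF \<open>R \<noteq> 0\<close>] \<open>A \<subseteq> _\<close>] card_poly_roots_bound[OF \<open>R \<noteq> 0\<close>]
    by linarith
  then show "card A \<le> 2 * max (degree p) (degree q)"
    using degree_norm_sq_diff_poly_le[of p q] by (simp add: R_def)
  show "card A < 2 * max (degree p) (degree q)"
    if "None \<in> E" "cmod (rval p q None) = 1"
  proof -
    from assms(1) \<open>None \<in> E\<close> have "degree p \<le> degree q" by (rule LL_degree_le_at_infinity)
    with \<open>q \<noteq> 0\<close> have "rval p q None = coeff p (degree q) / lead_coeff q"
      using tendsto_poly_ratio_at_infinity[of p "degree q" q]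
      by (simp add: rval_def tendsto_Lim[OF trivial_limit_at_infinity])
    with that(2) \<open>q \<noteq> 0\<close> have "norm (coeff p (degree q)) = norm (lead_coeff q)"
      by (simp add: norm_divide)
    with \<open>R \<noteq> 0\<close> \<open>degree p \<le> degree q\<close> have "degree R < 2 * degree q"
      unfolding R_def by (rule degree_norm_sq_diff_poly_less)
    with card_le \<open>degree p \<le> degree q\<close> show ?thesis by simp
  qed
qed

lemma exists_better_admissible:
  assumes adm: "admissible E D p q" and PF: "has_numerator p q PF" "degree PF \<le> n"
    and PK: "degree PK \<le> n" "leading_coeff_at x PK \<noteq> 0"
    and vanish: "\<And>y. y \<in> E \<Longrightarrow> cmod (rval p q y) = 1 \<Longrightarrow> circle_fun PK (cayley y) = 0"
  obtains p' q' where "admissible E D p' q'"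
    "Re (lead_val p q x (nat (D x))) < Re (lead_val p' q' x (nat (D x)))"
proof -
  define lF where "lF = leading_coeff_at x PF"
  obtain \<epsilon> :: real and p' q' where "0 < \<epsilon>" "admissible E D p' q'" and lead:
    "\<And>y. lead_val p' q' y (nat (D y)) = of_real (1 - \<epsilon>) * leading_coeff_at y PF
       + of_real \<epsilon> * ((1 + cmod lF) / leading_coeff_at x PK) * leading_coeff_at y PK"
    using admissible_perturbation[OF adm PF PK(1) vanish, where t = "(1 + cmod lF) / leading_coeff_at x PK"]
    by blast
  have "lead_val p q x (nat (D x)) = lF"
    unfolding lF_def by (rule lead_val_eq_leading_coeff_at[OF PF])
  moreover have "Re lF < Re (of_real (1 - \<epsilon>) * lF + of_real \<epsilon> * (1 + cmod lF))"
  proof -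
    have "\<epsilon> * Re lF \<le> \<epsilon> * cmod lF"
      using \<open>0 < \<epsilon>\<close> complex_Re_le_cmod[of lF] by (intro mult_left_mono) auto
    moreover have "Re (of_real (1 - \<epsilon>) * lF + of_real \<epsilon> * (1 + cmod lF))
        = Re lF - \<epsilon> * Re lF + \<epsilon> + \<epsilon> * cmod lF"
      by (simp add: algebra_simps)
    ultimately show ?thesis using \<open>0 < \<epsilon>\<close> by linarith
  qed
  ultimately show ?thesis
    using that[OF \<open>admissible E D p' q'\<close>] lead[of x] PK(2) by (simp add: lF_def)
qed

lemma extremal_rdeg_lower_bound:
  assumes adm: "admissible E D p q"
    and maximal: "\<And>p' q'. admissible E D p' q' \<Longrightarrow>
                   Re (lead_val p' q' x (nat (D x))) \<le> Re (lead_val p q x (nat (D x)))"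
    and nonconst: "\<not> is_constant_rf p q" and "x \<notin> E"
  shows "n < 2 * rdeg p q"
proof (rule ccontr)
  assume "\<not> n < 2 * rdeg p q"
  from adm have LL: "(p, q) \<in> LL D" by (simp add: admissible_def)
  then have "q \<noteq> 0" by (simp add: LL_def ratfun_def)
  with \<open>\<not> n < 2 * rdeg p q\<close> have small: "2 * max (degree p) (degree q) \<le> n"
    using max_degree_le_rdeg[of q p] by linarith
  define A where "A = {z. Some z \<in> E \<and> cmod (rval p q (Some z)) = 1}"
  note card_A = card_unimodular_points[OF LL nonconst, folded A_def]
  obtain PF where PF: "has_numerator p q PF" "degree PF \<le> n" by (rule LL_has_numerator[OF LL])
  have "x \<notin> Some ` A" using \<open>x \<notin> E\<close> by (auto simp: A_def)
  have "card A \<le> n" using card_A(2) small by linarith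
  obtain PK where PK: "degree PK \<le> n" "\<And>a. a \<in> A \<Longrightarrow> poly PK a = 0"
      "case x of None \<Rightarrow> coeff PK n \<noteq> 0 | Some c \<Rightarrow> poly PK c \<noteq> 0" "x \<noteq> None \<Longrightarrow> degree PK = card A"
    using exists_poly_vanishing_on[OF card_A(1) \<open>card A \<le> n\<close> \<open>x \<notin> Some ` A\<close>] by blast
  have "circle_fun PK (cayley y) = 0" if "y \<in> E" "cmod (rval p q y) = 1" for y
  proof (rule circle_fun_cayley_eq_0[OF PK(1) \<open>y \<in> E\<close>])
    show "case y of None \<Rightarrow> coeff PK n = 0 | Some z \<Rightarrow> poly PK z = 0"
    proof (cases y)
      case None
      with that \<open>x \<notin> E\<close> have "x \<noteq> None" by metis
      with PK(4) card_A(3) that None small have "degree PK < n" by simp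
      with None show ?thesis by (simp add: coeff_eq_0)
    next
      case (Some z)
      with that PK(2) show ?thesis by (simp add: A_def)
    qed
  qed
  with adm PF PK(1) leading_coeff_at_nonzero[OF PK(3)]
  obtain p' q' where "admissible E D p' q'"
    "Re (lead_val p q x (nat (D x))) < Re (lead_val p' q' x (nat (D x)))"
    by (rule exists_better_admissible)
  with maximal show False by (meson not_le)
qed

end

theorem corollary2p8:
  fixes E :: "csphere set" and D :: "csphere \<Rightarrow> int" and n :: nat and xs :: csphere
    and p q :: "complex poly"
  assumes E_sub: "E \<subseteq> ext_reals"
    and E_compact: "compact_ext E"
    and E_proper: "E \<noteq> ext_reals"
    and E_inf: "infinite E"
    and n_pos: "n \<ge> 1"
    and D_integral: "\<forall>x. D x \<ge> 0"
    and D_fin: "finite {x. D x \<noteq> 0}"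
    and D_deg: "(\<Sum>x\<in>{x. D x \<noteq> 0}. D x) = int n"
    and D_supp: "{x. D x \<noteq> 0} \<subseteq> ext_reals - E"
    and xs_in: "xs \<in> ext_reals - E"
    and F_adm: "admissible E D p q"
    and F_max: "\<forall>p' q'. admissible E D p' q' \<longrightarrow>
                  Re (lead_val p' q' xs (nat (D xs))) \<le> Re (lead_val p q xs (nat (D xs)))"
    and F_nonconst: "\<not> is_constant_rf p q"
  shows "int (rdeg p q) \<ge> \<lceil>(real n + 1) / 2\<rceil>"
proof -
  obtain Q where Q: "Q \<noteq> 0" "\<And>c. order c Q = nat (D (Some c))" "degree Q + nat (D None) = n"
    using divisor_denominator_exists[of D n] D_integral D_fin D_deg by blast
  interpret common_denominator E D n Q
    using E_sub E_compact D_integral D_supp Q by unfold_locales auto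
  have "n < 2 * rdeg p q"
    using extremal_rdeg_lower_bound[OF F_adm _ F_nonconst] F_max xs_in by blast
  then have "real n + 1 \<le> 2 * real (rdeg p q)" by linarith
  then show ?thesis by (simp add: ceiling_le_iff)
qed

end
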